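(* Let $\mathcal{C}$ be a systematic $[n,k,d]$ linear code over $\mathbb{F}_q$ with information symbols in the first $k$ coordinates, which is an $(r,\delta)_i$ code and achieves $$d = n-k+1-\left(\left\lceil \tfrac{k}{r}\right\rceil -1\right)(\delta-1).$$ Then the generalized Hamming weights of the dual code satisfy $$d^{\perp}_{(\lceil k/r\rceil -1)(\delta-1)+i} \;=\; k+\left(\left\lceil \tfrac{k}{r}\right\rceil -1\right)(\delta-1)+i$$ for all $1 \le i \le n-k-(\delta-1)\left(\lceil k/r\rceil -1\right)$.
   Context: For a linear code $\mathcal{D}$ of dimension $m$, its $j$-th generalized Hamming weight ($1\le j\le m$) is the minimum, over all $j$-dimensional subcodes $\mathcal{E}$ of $\mathcal{D}$, of the size of the support $\mathrm{supp}(\mathcal{E}) = \bigcup_{\mathbf{c}\in\mathcal{E}}\{l : c_l \neq 0\}$. $d^\perp_j$ denotes the $j$-th generalized Hamming weight of the dual code $\mathcal{C}^\perp$. Coordinate $i$ has locality $(r,\delta)$ if there is $S_i \subseteq [n]$ with $i\in S_i$, $|S_i|\le r+\delta-1$, such that the punctured code $\mathcal{C}|_{S_i}$ (delete coordinates outside $S_i$) has minimum distance at least $\delta$. An $(r,\delta)_i$ code is a systematic linear code in which all $k$ information coordinates have locality $(r,\delta)$. *)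

theory Defs
  imports Complex_Main "HOL-Library.Function_Algebras"
begin

text \<open>Vectors over a field are modelled as functions nat => 'a; a vector of
length n is one that vanishes at all coordinates >= n (coordinates are 0..n-1,
so "the first k coordinates" are 0..k-1).\<close>

definition fscale :: "'a::field \<Rightarrow> (nat \<Rightarrow> 'a) \<Rightarrow> (nat \<Rightarrow> 'a)" where
  "fscale c v = (\<lambda>i. c * v i)"

interpretation fvs: vector_space fscale
  by unfold_locales (auto simp: fscale_def fun_eq_iff algebra_simps)

definition vecs :: "nat \<Rightarrow> (nat \<Rightarrow> 'a::field) set" where
  "vecs n = {v. \<forall>i\<ge>n. v i = 0}"

definition linear_code :: "nat \<Rightarrow> (nat \<Rightarrow> 'a::field) set \<Rightarrow> bool" where
  "linear_code n C \<longleftrightarrow> fvs.subspace C \<and> C \<subseteq> vecs n"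

definition supp :: "(nat \<Rightarrow> 'a::zero) \<Rightarrow> nat set" where
  "supp v = {l. v l \<noteq> 0}"

definition code_supp :: "(nat \<Rightarrow> 'a::zero) set \<Rightarrow> nat set" where
  "code_supp E = (\<Union>c\<in>E. supp c)"

definition min_dist :: "(nat \<Rightarrow> 'a::zero) set \<Rightarrow> nat" where
  "min_dist C = Min ((\<lambda>c. card (supp c)) ` (C - {0}))"

definition ghw :: "(nat \<Rightarrow> 'a::field) set \<Rightarrow> nat \<Rightarrow> nat" where
  "ghw D j = (LEAST w. \<exists>E. fvs.subspace E \<and> E \<subseteq> D \<and> fvs.dim E = j \<and> card (code_supp E) = w)"

definition dual_code :: "nat \<Rightarrow> (nat \<Rightarrow> 'a::field) set \<Rightarrow> (nat \<Rightarrow> 'a) set" where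
  "dual_code n C = {v \<in> vecs n. \<forall>c\<in>C. (\<Sum>l<n. v l * c l) = 0}"

definition puncture :: "nat set \<Rightarrow> (nat \<Rightarrow> 'a::zero) set \<Rightarrow> (nat \<Rightarrow> 'a) set" where
  "puncture S C = (\<lambda>c l. if l \<in> S then c l else 0) ` C"

text \<open>Minimum distance at least delta (vacuous for the zero code).\<close>
definition min_dist_ge :: "(nat \<Rightarrow> 'a::zero) set \<Rightarrow> nat \<Rightarrow> bool" where
  "min_dist_ge C \<delta> \<longleftrightarrow> (\<forall>c\<in>C. c \<noteq> 0 \<longrightarrow> \<delta> \<le> card (supp c))"

definition has_locality :: "nat \<Rightarrow> (nat \<Rightarrow> 'a::zero) set \<Rightarrow> nat \<Rightarrow> nat \<Rightarrow> nat \<Rightarrow> bool" where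
  "has_locality n C r \<delta> i \<longleftrightarrow>
     (\<exists>S \<subseteq> {..<n}. i \<in> S \<and> card S \<le> r + \<delta> - 1 \<and> min_dist_ge (puncture S C) \<delta>)"

definition systematic_first :: "nat \<Rightarrow> (nat \<Rightarrow> 'a::field) set \<Rightarrow> bool" where
  "systematic_first k C \<longleftrightarrow> (\<forall>x\<in>vecs k. \<exists>!c\<in>C. \<forall>l<k. c l = x l)"

definition rdelta_i_code :: "nat \<Rightarrow> nat \<Rightarrow> (nat \<Rightarrow> 'a::field) set \<Rightarrow> nat \<Rightarrow> nat \<Rightarrow> bool" where
  "rdelta_i_code n k C r \<delta> \<longleftrightarrow> systematic_first k C \<and> (\<forall>i<k. has_locality n C r \<delta> i)"

end

theory Submission
  imports Defs
begin

text \<open>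
Let \<open>E\<close> be a \<open>j\<close>-dimensional subcode of the dual with support \<open>S\<close>. Gaussian
elimination yields \<open>j\<close> coordinates \<open>J \<subseteq> S\<close> on which \<open>E\<close> contains the unit
vectors, so by orthogonality every codeword of \<open>C\<close> vanishing on \<open>S - J\<close> vanishes on
all of \<open>S\<close>. These codewords form a subcode of dimension at least \<open>k + j - |S|\<close>
supported off \<open>S\<close>, and the generalized Singleton bound for it gives \<open>|S| \<ge> k + j\<close>
whenever \<open>d + k + j > n + 1\<close>; with \<open>d\<close> attaining the bound this holds exactly for
\<open>j > (\<lceil>k/r\<rceil> - 1)(\<delta> - 1)\<close>. Conversely, in systematic form the dual contains the
parity checks \<open>e\<^sub>p - (\<Sum>l<k. u\<^sub>l(p) e\<^sub>l)\<close>, and those with \<open>k \<le> p < k + j\<close> span a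
\<open>j\<close>-dimensional subcode supported on the first \<open>k + j\<close> coordinates.

Only the systematic form and the value of \<open>d\<close> are used; locality plays no further role.
\<close>

lemma fscale_apply: "fscale c v l = c * v l"
  by (simp add: fscale_def)

lemma sum_fun_apply: "(\<Sum>x\<in>A. f x) y = (\<Sum>x\<in>A. f x y)"
  by (induction A rule: infinite_finite_induct) auto

lemma finite_vecs: "finite (vecs n :: (nat \<Rightarrow> 'a::{finite,field}) set)"
proof -
  have "vecs n = {f :: nat \<Rightarrow> 'a. \<forall>l. (l \<in> {..<n} \<longrightarrow> f l \<in> UNIV) \<and> (l \<notin> {..<n} \<longrightarrow> f l = 0)}"
    by (auto simp: vecs_def)
  then show ?thesis
    using finite_set_of_finite_funs[of "{..<n}" "UNIV :: 'a set" 0] by simp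
qed

lemma vecs_subspace: "fvs.subspace (vecs n)"
  by (auto simp: fvs.subspace_def vecs_def fscale_apply)

lemma subspace_vanishing:
  assumes "fvs.subspace K"
  shows "fvs.subspace {v\<in>K. \<forall>l\<in>L. v l = 0}"
  using assms unfolding fvs.subspace_def by (auto simp: fscale_apply)

lemma dual_code_subset_vecs: "dual_code n C \<subseteq> vecs n"
  by (auto simp: dual_code_def)

lemma dual_code_subspace: "fvs.subspace (dual_code n C)"
  unfolding fvs.subspace_def dual_code_def vecs_def
  by (auto simp: fscale_apply distrib_right sum.distrib mult.assoc simp flip: sum_distrib_left)

lemma supp_subset_code_supp: "c \<in> K \<Longrightarrow> supp c \<subseteq> code_supp K"
  by (auto simp: code_supp_def)

lemma code_supp_subset_lessThan: "K \<subseteq> vecs n \<Longrightarrow> code_supp K \<subseteq> {..<n}"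
  by (force simp: code_supp_def supp_def vecs_def not_less[symmetric])

lemma finite_code_supp: "K \<subseteq> vecs n \<Longrightarrow> finite (code_supp K)"
  by (rule finite_subset[OF code_supp_subset_lessThan]) auto

lemma min_dist_le_weight:
  fixes C :: "(nat \<Rightarrow> 'a::{finite,field}) set"
  assumes "C \<subseteq> vecs n" "c \<in> C" "c \<noteq> 0"
  shows "min_dist C \<le> card (supp c)"
  unfolding min_dist_def using assms finite_subset[OF assms(1) finite_vecs] by (intro Min_le) auto

lemma exists_nonzero_if_dim_pos:
  assumes "1 \<le> fvs.dim K"
  shows "\<exists>c\<in>K. c \<noteq> 0"
proof (rule ccontr)
  assume "\<not> ?thesis"
  then have "K \<subseteq> fvs.span {}" by auto
  then have "fvs.dim K \<le> 0" using fvs.dim_le_card[of K "{}"] by simp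
  then show False using assms by simp
qed

lemma dim_le_Suc_dim_vanishing:
  fixes K :: "(nat \<Rightarrow> 'a::{finite,field}) set"
  assumes K: "fvs.subspace K" "K \<subseteq> vecs n"
  shows "fvs.dim K \<le> fvs.dim {v\<in>K. v l = 0} + 1"
proof (cases "\<forall>v\<in>K. v l = 0")
  case True
  then have "{v\<in>K. v l = 0} = K" by blast
  then show ?thesis by simp
next
  case False
  then obtain u where u: "u \<in> K" "u l \<noteq> 0" by blast
  let ?K' = "{v\<in>K. v l = 0}"
  obtain B where B: "B \<subseteq> ?K'" "fvs.independent B" "?K' \<subseteq> fvs.span B" "card B = fvs.dim ?K'"
    by (rule fvs.basis_exists)
  have "finite B" using B(1) K(2) by (intro finite_subset[OF _ finite_vecs]) blast
  have "K \<subseteq> fvs.span (insert u B)"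
  proof
    fix v assume v: "v \<in> K"
    have "v - fscale (v l / u l) u \<in> ?K'"
      using u v by (simp add: K(1) fvs.subspace_diff fvs.subspace_scale fscale_apply)
    then show "v \<in> fvs.span (insert u B)"
      using B(3) by (auto simp: fvs.span_breakdown_eq)
  qed
  then have "fvs.dim K \<le> card (insert u B)"
    using \<open>finite B\<close> by (intro fvs.dim_le_card) simp_all
  also have "\<dots> \<le> card B + 1"
    using \<open>finite B\<close> by (simp add: card_insert_if)
  finally show ?thesis using B(4) by simp
qed

lemma dim_le_dim_vanishing_add_card:
  fixes K :: "(nat \<Rightarrow> 'a::{finite,field}) set"
  assumes K: "fvs.subspace K" "K \<subseteq> vecs n" and "finite L"
  shows "fvs.dim K \<le> fvs.dim {v\<in>K. \<forall>l\<in>L. v l = 0} + card L"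
  using \<open>finite L\<close>
proof (induction L rule: finite_induct)
  case (insert a L)
  let ?KL = "{v\<in>K. \<forall>l\<in>L. v l = 0}"
  have "{v\<in>?KL. v a = 0} = {v\<in>K. \<forall>l\<in>insert a L. v l = 0}" by auto
  moreover have "fvs.dim ?KL \<le> fvs.dim {v\<in>?KL. v a = 0} + 1"
    using K subspace_vanishing by (intro dim_le_Suc_dim_vanishing[of _ n]) auto
  ultimately have "fvs.dim ?KL \<le> fvs.dim {v\<in>K. \<forall>l\<in>insert a L. v l = 0} + 1" by simp
  moreover have "card (insert a L) = card L + 1" using insert.hyps by simp
  ultimately show ?case using insert.IH by linarith
qed simp

lemma generalized_singleton_bound:
  fixes K :: "(nat \<Rightarrow> 'a::{finite,field}) set"
  assumes "1 \<le> s" "s \<le> fvs.dim K" "fvs.subspace K" "K \<subseteq> vecs n"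
    and "\<And>c. c \<in> K \<Longrightarrow> c \<noteq> 0 \<Longrightarrow> d \<le> card (supp c)"
  shows "d + s \<le> card (code_supp K) + 1"
  using assms
proof (induction s arbitrary: K rule: nat_induct_at_least)
  case base
  then obtain c where c: "c \<in> K" "c \<noteq> 0" using exists_nonzero_if_dim_pos by blast
  have "d \<le> card (supp c)" using base.prems(4) c by blast
  also have "card (supp c) \<le> card (code_supp K)"
    using c base.prems(3) by (intro card_mono finite_code_supp supp_subset_code_supp)
  finally show ?case by simp
next
  case (Suc s)
  have "1 \<le> fvs.dim K" using Suc.prems(1) by simp
  then obtain c where "c \<in> K" "c \<noteq> 0" using exists_nonzero_if_dim_pos by blast
  then obtain l where l: "c l \<noteq> 0" by (auto simp: fun_eq_iff)
  let ?K' = "{v\<in>K. v l = 0}"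
  have "d + s \<le> card (code_supp ?K') + 1"
  proof (rule Suc.IH)
    show "fvs.subspace ?K'" using subspace_vanishing[OF Suc.prems(2), of "{l}"] by simp
    show "s \<le> fvs.dim ?K'" using dim_le_Suc_dim_vanishing[OF Suc.prems(2,3), of l] Suc.prems(1) by simp
  qed (use Suc.prems in auto)
  moreover have "code_supp ?K' \<subset> code_supp K"
    using \<open>c \<in> K\<close> l by (auto simp: code_supp_def supp_def)
  then have "card (code_supp ?K') < card (code_supp K)"
    using Suc.prems(3) finite_code_supp by (blast intro: psubset_card_mono)
  ultimately show ?case by simp
qed

lemma exists_unit_coordinates:
  fixes E :: "(nat \<Rightarrow> 'a::{finite,field}) set"
  assumes "fvs.subspace E" "E \<subseteq> vecs n" "j \<le> fvs.dim E"
  shows "\<exists>J \<subseteq> code_supp E. card J = j \<and>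
    (\<forall>l\<in>J. \<exists>e\<in>E. e l = 1 \<and> (\<forall>l'\<in>J - {l}. e l' = 0))"
  using assms
proof (induction j arbitrary: E)
  case 0
  then show ?case by (intro exI[of _ "{}"]) auto
next
  case (Suc j)
  note E = Suc.prems(1,2)
  have "1 \<le> fvs.dim E" using Suc.prems(3) by simp
  then obtain c where "c \<in> E" "c \<noteq> 0" using exists_nonzero_if_dim_pos by blast
  then obtain l where l: "c l \<noteq> 0" by (auto simp: fun_eq_iff)
  define u where "u = fscale (1 / c l) c"
  have u: "u \<in> E" "u l = 1"
    using E(1) \<open>c \<in> E\<close> l by (simp_all add: u_def fvs.subspace_scale) (simp add: fscale_apply)
  let ?E' = "{v\<in>E. v l = 0}"
  have "j \<le> fvs.dim ?E'" using dim_le_Suc_dim_vanishing[OF E, of l] Suc.prems(3) by simp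
  then obtain J where J: "J \<subseteq> code_supp ?E'" "card J = j"
    and unit: "\<forall>l0\<in>J. \<exists>e\<in>?E'. e l0 = 1 \<and> (\<forall>l'\<in>J - {l0}. e l' = 0)"
    using Suc.IH[of ?E'] E subspace_vanishing[of E "{l}"] by auto
  have "\<forall>l0\<in>J. \<exists>e. e \<in> E \<and> e l = 0 \<and> e l0 = 1 \<and> (\<forall>l'\<in>J - {l0}. e l' = 0)"
    using unit by auto
  then obtain g where g: "\<And>l0. l0 \<in> J \<Longrightarrow>
      g l0 \<in> E \<and> g l0 l = 0 \<and> g l0 l0 = 1 \<and> (\<forall>l'\<in>J - {l0}. g l0 l' = 0)"
    by (metis bchoice)
  have "finite J" using J(1) E(2) by (intro finite_subset[OF _ finite_code_supp[of ?E' n]]) auto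
  have "l \<notin> J" "J \<subseteq> code_supp E" using J(1) by (auto simp: code_supp_def supp_def)
  define w where "w = u - (\<Sum>l0\<in>J. fscale (u l0) (g l0))"
  have "w \<in> E" unfolding w_def
    using E(1) u g by (intro fvs.subspace_diff fvs.subspace_sum fvs.subspace_scale) auto
  moreover have "w l = 1" using u g by (simp add: w_def sum_fun_apply fscale_apply)
  moreover have "w l' = 0" if "l' \<in> J" for l'
  proof -
    have "(\<Sum>l0\<in>J. u l0 * g l0 l') = (\<Sum>l0\<in>J. if l0 = l' then u l' else 0)"
      using g that by (intro sum.cong) auto
    then show ?thesis using that \<open>finite J\<close> by (simp add: w_def sum_fun_apply fscale_apply)
  qed
  ultimately show ?case
    using J(2) g \<open>finite J\<close> \<open>l \<notin> J\<close> \<open>J \<subseteq> code_supp E\<close> \<open>c \<in> E\<close> l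
    by (intro exI[of _ "insert l J"]) (auto simp: code_supp_def supp_def)
qed

lemma orthogonal_vanishes_at_single_overlap:
  assumes "e \<in> dual_code n C" "c \<in> C" "l < n" "e l \<noteq> 0"
    and "\<And>l'. l' \<noteq> l \<Longrightarrow> e l' * c l' = 0"
  shows "c l = 0"
proof -
  have "0 = (\<Sum>l'<n. e l' * c l')" using assms(1,2) by (simp add: dual_code_def)
  also have "\<dots> = (\<Sum>l'<n. if l' = l then e l * c l else 0)"
    using assms(5) by (intro sum.cong) auto
  also have "\<dots> = e l * c l" using assms(3) by simp
  finally show ?thesis using assms(4) by simp
qed

lemma dual_support_lower_bound:
  fixes C :: "(nat \<Rightarrow> 'a::{finite,field}) set"
  assumes C: "fvs.subspace C" "C \<subseteq> vecs n" "fvs.dim C = k"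
    and weight: "\<And>c. c \<in> C \<Longrightarrow> c \<noteq> 0 \<Longrightarrow> d \<le> card (supp c)"
    and E: "fvs.subspace E" "E \<subseteq> dual_code n C"
    and beyond_singleton: "n + 1 < d + k + fvs.dim E"
  shows "k + fvs.dim E \<le> card (code_supp E)"
proof (rule ccontr)
  assume short: "\<not> ?thesis"
  define j where "j = fvs.dim E"
  define S where "S = code_supp E"
  have En: "E \<subseteq> vecs n" using E(2) dual_code_subset_vecs by blast
  then have S: "S \<subseteq> {..<n}" "finite S" by (simp_all add: S_def code_supp_subset_lessThan finite_code_supp)
  obtain J where J: "J \<subseteq> S" "card J = j"
    and unit: "\<forall>l\<in>J. \<exists>e\<in>E. e l = 1 \<and> (\<forall>l'\<in>J - {l}. e l' = 0)"
    using exists_unit_coordinates[OF E(1) En, of j] by (auto simp: S_def j_def)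
  define K where "K = {c\<in>C. \<forall>l\<in>S - J. c l = 0}"
  have K: "fvs.subspace K" "K \<subseteq> vecs n"
    using subspace_vanishing[OF C(1)] C(2) by (auto simp: K_def)
  have "k \<le> fvs.dim K + card (S - J)"
    using dim_le_dim_vanishing_add_card[OF C(1,2), of "S - J"] S C(3) by (simp add: K_def)
  moreover have "card (S - J) = card S - j"
    using J S(2) by (simp add: card_Diff_subset finite_subset)
  moreover have "j \<le> card S" using card_mono[OF S(2) J(1)] J(2) by simp
  ultimately have dim_K: "k + j \<le> fvs.dim K + card S" by linarith
  have vanish: "c l = 0" if c: "c \<in> K" and l: "l \<in> S" for c l
  proof (cases "l \<in> J")
    case True
    then obtain e where e: "e \<in> E" "e l = 1" "\<forall>l'\<in>J - {l}. e l' = 0" using unit by blast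
    have "e l' = 0" if "l' \<notin> S" for l'
      using e(1) that by (auto simp: S_def code_supp_def supp_def)
    then have "e l' * c l' = 0" if "l' \<noteq> l" for l'
      using e(3) c that by (cases "l' \<in> S") (auto simp: K_def)
    then show ?thesis
      using orthogonal_vanishes_at_single_overlap[of e n C c l] e E(2) c l S(1)
      by (auto simp: K_def)
  qed (use c l in \<open>auto simp: K_def\<close>)
  have "code_supp K \<subseteq> {..<n} - S"
    using code_supp_subset_lessThan[OF K(2)] vanish by (auto simp: code_supp_def supp_def)
  then have "card (code_supp K) \<le> n - card S"
    using card_mono[of "{..<n} - S"] card_Diff_subset[OF S(2,1)] by simp
  moreover have "d + fvs.dim K \<le> card (code_supp K) + 1"
    using dim_K short weight
    by (intro generalized_singleton_bound[OF _ order_refl K]) (auto simp: j_def S_def K_def)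
  moreover have "card S \<le> n" using card_mono[OF _ S(1)] by simp
  ultimately show False using dim_K beyond_singleton by (simp add: j_def)
qed

lemma systematic_unit_codewords:
  assumes "systematic_first k C"
  obtains u where "\<And>l. l < k \<Longrightarrow> u l \<in> C"
    and "\<And>l l'. l < k \<Longrightarrow> l' < k \<Longrightarrow> u l l' = (if l' = l then 1 else 0)"
proof -
  have "\<forall>l\<in>{..<k}. \<exists>c. c \<in> C \<and> (\<forall>l'<k. c l' = (if l' = l then 1 else 0))"
  proof
    fix l assume "l \<in> {..<k}"
    then have "(\<lambda>l'. if l' = l then 1 else 0) \<in> vecs k" by (auto simp: vecs_def)
    then show "\<exists>c. c \<in> C \<and> (\<forall>l'<k. c l' = (if l' = l then 1 else 0))"
      using assms unfolding systematic_first_def by fastforce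
  qed
  then show thesis using that by (metis bchoice lessThan_iff)
qed

lemma systematic_expansion:
  assumes C: "fvs.subspace C" and sys: "systematic_first k C"
    and u: "\<And>l. l < k \<Longrightarrow> u l \<in> C" "\<And>l l'. l < k \<Longrightarrow> l' < k \<Longrightarrow> u l l' = (if l' = l then 1 else 0)"
    and c: "c \<in> C"
  shows "c = (\<Sum>l<k. fscale (c l) (u l))"
proof -
  let ?y = "\<Sum>l<k. fscale (c l) (u l)"
  have "?y \<in> C" using C u(1) by (intro fvs.subspace_sum fvs.subspace_scale) auto
  moreover have "?y l' = c l'" if "l' < k" for l'
  proof -
    have "?y l' = (\<Sum>l<k. if l = l' then c l' else 0)"
      unfolding sum_fun_apply fscale_apply using u(2) that by (intro sum.cong) auto
    then show ?thesis using that by simp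
  qed
  moreover
  let ?x = "\<lambda>l. if l < k then c l else 0"
  have "?x \<in> vecs k" by (simp add: vecs_def)
  then have "\<exists>!c'\<in>C. \<forall>l<k. c' l = ?x l" by (rule bspec[OF sys[unfolded systematic_first_def]])
  then have "a = b" if "a \<in> C" "b \<in> C" "\<forall>l<k. a l = ?x l" "\<forall>l<k. b l = ?x l" for a b
    using that by blast
  ultimately show ?thesis using c by simp
qed

lemma systematic_parity_check_in_dual:
  assumes C: "fvs.subspace C" and sys: "systematic_first k C"
    and u: "\<And>l. l < k \<Longrightarrow> u l \<in> C" "\<And>l l'. l < k \<Longrightarrow> l' < k \<Longrightarrow> u l l' = (if l' = l then 1 else 0)"
    and p: "k \<le> p" "p < n"
  shows "(\<lambda>l. if l = p then 1 else if l < k then - u l p else 0) \<in> dual_code n C"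
proof -
  have "(\<Sum>l<n. (if l = p then 1 else if l < k then - u l p else 0) * c l) = 0" if c: "c \<in> C" for c
  proof -
    have "(\<Sum>l<n. (if l = p then 1 else if l < k then - u l p else 0) * c l)
        = (\<Sum>l<n. (if l = p then c p else 0) - (if l < k then c l * u l p else 0))"
      using p by (intro sum.cong) auto
    also have "\<dots> = c p - (\<Sum>l<k. c l * u l p)"
      using p by (simp add: sum_subtractf sum.mono_neutral_cong_right[of "{..<n}" "{..<k}"])
    also have "c p = (\<Sum>l<k. fscale (c l) (u l)) p"
      using systematic_expansion[OF C sys u c] by (rule fun_cong)
    also have "\<dots> = (\<Sum>l<k. c l * u l p)" by (simp add: sum_fun_apply fscale_apply)
    finally show ?thesis by simp
  qed
  then show ?thesis using p by (simp add: dual_code_def vecs_def)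
qed

lemma unit_coordinate_family_independent:
  assumes "finite J" and unit: "\<And>p q. p \<in> J \<Longrightarrow> q \<in> J \<Longrightarrow> h p q = (if q = p then 1 else (0::'a::field))"
  shows "inj_on h J" "fvs.independent (h ` J)"
proof -
  show inj: "inj_on h J"
    by (rule inj_onI) (metis unit one_neq_zero)
  show "fvs.independent (h ` J)"
  proof (rule fvs.independent_if_scalars_zero)
    fix f x assume sum0: "(\<Sum>x\<in>h ` J. fscale (f x) x) = 0" and "x \<in> h ` J"
    then obtain p where p: "p \<in> J" "x = h p" by blast
    have "0 = (\<Sum>x\<in>h ` J. fscale (f x) x) p" using sum0 by simp
    also have "\<dots> = (\<Sum>q\<in>J. f (h q) * h q p)"
      by (simp add: sum_fun_apply fscale_apply sum.reindex[OF inj])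
    also have "\<dots> = (\<Sum>q\<in>J. if q = p then f (h p) else 0)"
      using unit p(1) by (intro sum.cong) auto
    also have "\<dots> = f x" using p assms(1) by simp
    finally show "f x = 0" by simp
  qed (use assms(1) in simp)
qed

lemma systematic_dual_subcode_small_support:
  fixes C :: "(nat \<Rightarrow> 'a::field) set"
  assumes C: "fvs.subspace C" and sys: "systematic_first k C" and "k + j \<le> n"
  obtains E where "fvs.subspace E" "E \<subseteq> dual_code n C" "fvs.dim E = j" "code_supp E \<subseteq> {..<k + j}"
proof -
  obtain u where u: "\<And>l. l < k \<Longrightarrow> u l \<in> C"
    "\<And>l l'. l < k \<Longrightarrow> l' < k \<Longrightarrow> u l l' = (if l' = l then 1 else 0)"
    using systematic_unit_codewords[OF sys] by blast
  define h where "h p = (\<lambda>l. if l = p then 1 else if l < k then - u l p else (0::'a))" for p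
  have "h p q = (if q = p then 1 else 0)" if "p \<in> {k..<k + j}" "q \<in> {k..<k + j}" for p q
    using that by (simp add: h_def)
  then have H: "inj_on h {k..<k + j}" "fvs.independent (h ` {k..<k + j})"
    using unit_coordinate_family_independent[of "{k..<k + j}" h] by simp_all
  define E where "E = fvs.span (h ` {k..<k + j})"
  have "h ` {k..<k + j} \<subseteq> dual_code n C"
    using systematic_parity_check_in_dual[OF C sys u] \<open>k + j \<le> n\<close> by (auto simp: h_def)
  then have "E \<subseteq> dual_code n C"
    unfolding E_def by (rule fvs.span_minimal[OF _ dual_code_subspace])
  moreover have "h ` {k..<k + j} \<subseteq> vecs (k + j)" by (auto simp: h_def vecs_def)
  then have "code_supp E \<subseteq> {..<k + j}"
    unfolding E_def by (intro code_supp_subset_lessThan fvs.span_minimal[OF _ vecs_subspace])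
  moreover have "fvs.dim E = j"
    using H by (simp add: E_def fvs.dim_eq_card_independent card_image)
  moreover have "fvs.subspace E" by (simp add: E_def fvs.subspace_span)
  ultimately show thesis using that by blast
qed

lemma ghw_eqI:
  assumes "fvs.subspace E" "E \<subseteq> D" "fvs.dim E = j" "card (code_supp E) \<le> w"
    and "\<And>E. fvs.subspace E \<Longrightarrow> E \<subseteq> D \<Longrightarrow> fvs.dim E = j \<Longrightarrow> w \<le> card (code_supp E)"
  shows "ghw D j = w"
  unfolding ghw_def
proof (rule Least_equality)
  show "\<exists>E. fvs.subspace E \<and> E \<subseteq> D \<and> fvs.dim E = j \<and> card (code_supp E) = w"
    using assms by (intro exI[of _ E]) (auto intro: le_antisym)
qed (use assms(5) in blast)

theorem corollary1:
  fixes C :: "(nat \<Rightarrow> 'a::{finite,field}) set"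
    and n k d r \<delta> :: nat
  assumes "linear_code n C"
    and "fvs.dim C = k"
    and "1 \<le> k" and "k \<le> n"
    and "min_dist C = d"
    and "1 \<le> r" and "1 \<le> \<delta>"
    and "rdelta_i_code n k C r \<delta>"
    and "int d = int n - int k + 1 - (\<lceil>real k / real r\<rceil> - 1) * (int \<delta> - 1)"
  shows "\<forall>i::nat. 1 \<le> i \<and> int i \<le> int n - int k - (int \<delta> - 1) * (\<lceil>real k / real r\<rceil> - 1) \<longrightarrow>
           int (ghw (dual_code n C) (nat ((\<lceil>real k / real r\<rceil> - 1) * (int \<delta> - 1) + int i)))
             = int k + (\<lceil>real k / real r\<rceil> - 1) * (int \<delta> - 1) + int i"
proof (intro allI impI)
  fix i :: nat
  assume i: "1 \<le> i \<and> int i \<le> int n - int k - (int \<delta> - 1) * (\<lceil>real k / real r\<rceil> - 1)"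
  define m where "m = nat ((\<lceil>real k / real r\<rceil> - 1) * (int \<delta> - 1))"
  have "\<lceil>real k / real r\<rceil> \<ge> 1" using assms(3,6) by simp
  then have m: "int m = (\<lceil>real k / real r\<rceil> - 1) * (int \<delta> - 1)" using assms(7) by (simp add: m_def)
  have C: "fvs.subspace C" "C \<subseteq> vecs n" using assms(1) by (simp_all add: linear_code_def)
  have weight: "d \<le> card (supp c)" if "c \<in> C" "c \<noteq> 0" for c
    using min_dist_le_weight[OF C(2) that] assms(5) by simp
  have singleton: "d + k + m = n + 1" using assms(9) m by linarith
  have "k + (m + i) \<le> n" using i m by (simp add: mult.commute)
  then obtain E where E: "fvs.subspace E" "E \<subseteq> dual_code n C" "fvs.dim E = m + i"
      "code_supp E \<subseteq> {..<k + (m + i)}"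
    using systematic_dual_subcode_small_support[OF C(1)] assms(8) by (metis rdelta_i_code_def)
  have "ghw (dual_code n C) (m + i) = k + (m + i)"
  proof (rule ghw_eqI[OF E(1-3)])
    show "card (code_supp E) \<le> k + (m + i)" using card_mono[OF _ E(4)] by simp
    show "k + (m + i) \<le> card (code_supp E')"
      if "fvs.subspace E'" "E' \<subseteq> dual_code n C" "fvs.dim E' = m + i" for E'
      using dual_support_lower_bound[OF C assms(2) weight that(1,2)] that(3) singleton i by simp
  qed
  moreover have "nat ((\<lceil>real k / real r\<rceil> - 1) * (int \<delta> - 1) + int i) = m + i" using m by simp
  ultimately show "int (ghw (dual_code n C) (nat ((\<lceil>real k / real r\<rceil> - 1) * (int \<delta> - 1) + int i)))
      = int k + (\<lceil>real k / real r\<rceil> - 1) * (int \<delta> - 1) + int i"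
    using m by simp
qed

end
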